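(* Let $H,\Delta\in\mathbb{C}^{n\times n}$ be Hermitian, let $H(t)=H+t\Delta$ for $t\in\mathbb{R}$, and let $f\in\mathbb{C}^n$ with $\|f\|_2=1$. If $\|\Delta\|_2|t|<\gamma(H)/2$, then \[ W_1\big(\mu_f^{H},\mu_f^{H(t)}\big)\le n\,\|\Delta\|_2\,|t| + \mathcal{O}\big((t\|\Delta\|_2)^2\big)\quad\text{as } t\to 0 . \]
   Context: For a Hermitian matrix $M$ with distinct eigenvalues $\mathrm{spec}(M)$ and orthogonal eigenprojections $P_\lambda$, and a unit vector $f$, the power spectrum is $\mu_f^M=\sum_{\lambda\in\mathrm{spec}(M)}\langle f,P_\lambda f\rangle\delta_\lambda$, a probability measure on $\mathbb{R}$; $W_1$ is the 1-Wasserstein distance on $\mathbb{R}$; $\|\cdot\|_2$ is the spectral norm. $\gamma(H)=\min\{|\lambda-\mu|:\lambda\neq\mu,\ \lambda,\mu\in\mathrm{spec}(H)\}$ is the minimal gap between distinct eigenvalues of $H$. *)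

theory Defs
  imports "HOL-Analysis.Analysis" "HOL-Library.Landau_Symbols"
begin

text \<open>Matrices in C^{n x n} are represented as complex^'n^'n, vectors in C^n as complex^'n
  (n = CARD('n)). The norm on complex^'n is the Euclidean (l2) norm.\<close>

definition hermitian :: "complex^'n^'n \<Rightarrow> bool" where
  "hermitian M \<longleftrightarrow> (\<forall>i j. M $ i $ j = cnj (M $ j $ i))"

definition cinner :: "complex^'n \<Rightarrow> complex^'n \<Rightarrow> complex" where
  "cinner x y = (\<Sum>i\<in>UNIV. cnj (x $ i) * y $ i)"

definition spec_norm :: "complex^'n^'n \<Rightarrow> real" where
  "spec_norm M = onorm (\<lambda>x. M *v x)"

definition spec :: "complex^'n^'n \<Rightarrow> real set" where
  "spec M = {l. \<exists>v. v \<noteq> 0 \<and> M *v v = complex_of_real l *s v}"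

definition eigenspace :: "complex^'n^'n \<Rightarrow> real \<Rightarrow> (complex^'n) set" where
  "eigenspace M l = {v. M *v v = complex_of_real l *s v}"

definition eigproj :: "complex^'n^'n \<Rightarrow> real \<Rightarrow> complex^'n \<Rightarrow> complex^'n" where
  "eigproj M l f = (THE p. p \<in> eigenspace M l \<and> (\<forall>v\<in>eigenspace M l. cinner v (f - p) = 0))"

definition gap :: "complex^'n^'n \<Rightarrow> real" where
  "gap H = Inf {\<bar>l - m\<bar> | l m. l \<in> spec H \<and> m \<in> spec H \<and> l \<noteq> m}"

text \<open>Power spectrum mu_f^M, represented by its (finitely supported) weight function:
  the measure is sum over l in spec M of w(l) * delta_l.\<close>
definition power_spectrum :: "complex^'n^'n \<Rightarrow> complex^'n \<Rightarrow> real \<Rightarrow> real" where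
  "power_spectrum M f = (\<lambda>l. if l \<in> spec M then Re (cinner f (eigproj M l f)) else 0)"

text \<open>1-Wasserstein distance between two finitely supported probability measures on R,
  given by weight functions p, q: infimum of the transport cost over all couplings.
  (Every coupling of such measures is supported on supp p x supp q.)\<close>
definition W1 :: "(real \<Rightarrow> real) \<Rightarrow> (real \<Rightarrow> real) \<Rightarrow> real" where
  "W1 p q = Inf {(\<Sum>(a,b)\<in>{x. p x \<noteq> 0} \<times> {x. q x \<noteq> 0}. \<pi> (a,b) * \<bar>a - b\<bar>) | \<pi>.
      (\<forall>z. 0 \<le> \<pi> z) \<and>
      (\<forall>a. p a \<noteq> 0 \<longrightarrow> (\<Sum>b\<in>{x. q x \<noteq> 0}. \<pi> (a,b)) = p a) \<and>
      (\<forall>b. q b \<noteq> 0 \<longrightarrow> (\<Sum>a\<in>{x. p x \<noteq> 0}. \<pi> (a,b)) = q b)}"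

end

theory Submission
  imports Defs
begin

text \<open>Let \<open>P\<^sub>a\<close> and \<open>Q\<^sub>b\<close> be the spectral projections of \<open>A = H\<close> and \<open>B = H + t \<Delta>\<close>. The numbers
  \<open>c(a, b) = Re \<langle>P\<^sub>a f, Q\<^sub>b f\<rangle>\<close> form a signed coupling of the two power spectra, and since
  \<open>\<langle>P\<^sub>a f, (B - A) Q\<^sub>b f\<rangle> = (b - a) \<langle>P\<^sub>a f, Q\<^sub>b f\<rangle>\<close>, its transport cost is at most
  \<open>\<parallel>B - A\<parallel> (\<Sum>\<^sub>a \<parallel>P\<^sub>a f\<parallel>) (\<Sum>\<^sub>b \<parallel>Q\<^sub>b f\<parallel>) \<le> n \<parallel>B - A\<parallel>\<close> by Cauchy-Schwarz, as there are at most \<open>n\<close>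
  eigenvalues and \<open>\<Sum>\<^sub>a \<parallel>P\<^sub>a f\<parallel>\<^sup>2 = 1\<close>. A signed coupling can be turned into a genuine one of no larger
  cost, so \<open>W\<^sub>1\<close> obeys the first-order bound exactly.\<close>

section \<open>Complex inner product and Hermitian matrices\<close>

lemma cinner_diff_right: "cinner x (y - z) = cinner x y - cinner x z"
  by (simp add: cinner_def right_diff_distrib sum_subtractf)

lemma cinner_scale_right: "cinner x (c *s y) = c * cinner x y"
  by (simp add: cinner_def sum_distrib_left algebra_simps)

lemma cinner_scale_left: "cinner (c *s x) y = cnj c * cinner x y"
  by (simp add: cinner_def sum_distrib_left algebra_simps)

lemma cinner_sum_right: "cinner x (\<Sum>s\<in>S. g s) = (\<Sum>s\<in>S. cinner x (g s))"
  unfolding cinner_def sum_component sum_distrib_left by (rule sum.swap)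

lemma cinner_sum_left: "cinner (\<Sum>s\<in>S. g s) x = (\<Sum>s\<in>S. cinner (g s) x)"
  unfolding cinner_def sum_component cnj_sum sum_distrib_right by (rule sum.swap)

lemma cinner_commute: "cinner y x = cnj (cinner x y)"
  by (simp add: cinner_def mult.commute)

lemma inner_vec_eq_Re_cinner: "x \<bullet> y = Re (cinner x y)"
  by (simp add: inner_vec_def cinner_def inner_complex_def Re_sum)

lemma cinner_self: "cinner x x = complex_of_real ((norm x)\<^sup>2)"
proof -
  have "(norm x)\<^sup>2 = (\<Sum>i\<in>UNIV. (cmod (x $ i))\<^sup>2)"
    unfolding power2_norm_eq_inner inner_vec_def by (simp add: power2_norm_eq_inner)
  then have "complex_of_real ((norm x)\<^sup>2) = (\<Sum>i\<in>UNIV. complex_of_real ((cmod (x $ i))\<^sup>2))"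
    by simp
  also have "\<dots> = cinner x x"
    unfolding cinner_def
    by (intro sum.cong refl) (metis complex_norm_square mult.commute of_real_power)
  finally show ?thesis
    by simp
qed

lemma cinner_self_eq_0_iff [simp]: "cinner x x = 0 \<longleftrightarrow> x = 0"
  by (simp add: cinner_self)

lemma norm_cinner_le: "cmod (cinner x y) \<le> norm x * norm y"
proof -
  define u :: "real^'a" where "u = (\<chi> i. cmod (x $ i))"
  define w :: "real^'a" where "w = (\<chi> i. cmod (y $ i))"
  have "cmod (cinner x y) \<le> (\<Sum>i\<in>UNIV. cmod (cnj (x $ i) * y $ i))"
    unfolding cinner_def by (rule norm_sum)
  also have "\<dots> = u \<bullet> w"
    by (simp add: u_def w_def inner_vec_def norm_mult)
  also have "\<dots> \<le> norm u * norm w"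
    by (rule norm_cauchy_schwarz)
  also have "\<dots> = norm x * norm y"
    by (simp add: u_def w_def norm_vec_def)
  finally show ?thesis .
qed

lemma matrix_vector_mult_scaleR_right:
  "(M::complex^'n^'m) *v (r *\<^sub>R x) = r *\<^sub>R (M *v x)"
  by (simp add: vec_eq_iff matrix_vector_mult_def scaleR_sum_right)

lemma matrix_vector_mult_scaleR_left:
  "(r *\<^sub>R (M::complex^'n^'m)) *v x = r *\<^sub>R (M *v x)"
  by (simp add: vec_eq_iff matrix_vector_mult_def scaleR_sum_right)

lemma matrix_vector_mult_scale_right:
  "(M::complex^'n^'m) *v (c *s x) = c *s (M *v x)"
  by (simp add: vec_eq_iff matrix_vector_mult_def sum_distrib_left algebra_simps)

lemma scaleR_eq_of_real_scale: "(r::real) *\<^sub>R (v::complex^'n) = complex_of_real r *s v"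
  by (simp only: vec_eq_iff vector_scaleR_component vector_smult_component)
    (simp add: scaleR_conv_of_real)

lemma spec_norm_nonneg: "0 \<le> spec_norm M"
  unfolding spec_norm_def by (rule onorm_pos_le) simp

lemma norm_matrix_vector_mult_le: "norm (M *v x) \<le> spec_norm M * norm x"
  unfolding spec_norm_def by (rule onorm) simp

lemma spec_norm_scaleR: "spec_norm (r *\<^sub>R M) = \<bar>r\<bar> * spec_norm M"
  unfolding spec_norm_def matrix_vector_mult_scaleR_left by (rule onorm_scaleR) simp

lemma hermitian_cinner_mult:
  assumes "hermitian M"
  shows "cinner (M *v x) y = cinner x (M *v y)"
proof -
  have "cinner (M *v x) y = (\<Sum>i\<in>UNIV. \<Sum>j\<in>UNIV. cnj (M $ i $ j) * cnj (x $ j) * y $ i)"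
    by (simp add: cinner_def matrix_vector_mult_def sum_distrib_right cnj_sum)
  also have "\<dots> = (\<Sum>j\<in>UNIV. \<Sum>i\<in>UNIV. cnj (x $ j) * (M $ j $ i * y $ i))"
  proof (subst sum.swap, intro sum.cong refl)
    fix i j
    have "cnj (M $ i $ j) = M $ j $ i"
      using assms unfolding hermitian_def by (metis complex_cnj_cnj)
    then show "cnj (M $ i $ j) * cnj (x $ j) * y $ i = cnj (x $ j) * (M $ j $ i * y $ i)"
      by (simp only: mult_ac)
  qed
  also have "\<dots> = cinner x (M *v y)"
    by (simp add: cinner_def matrix_vector_mult_def sum_distrib_left)
  finally show ?thesis .
qed

lemma hermitian_inner_mult:
  "hermitian M \<Longrightarrow> (M *v x) \<bullet> y = x \<bullet> (M *v y)"
  by (simp add: inner_vec_eq_Re_cinner hermitian_cinner_mult)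

lemma hermitian_add: "hermitian M \<Longrightarrow> hermitian N \<Longrightarrow> hermitian (M + N)"
  unfolding hermitian_def by (metis complex_cnj_add vector_add_component)

lemma hermitian_scaleR: "hermitian M \<Longrightarrow> hermitian (r *\<^sub>R M)"
  unfolding hermitian_def by (metis complex_cnj_scaleR vector_scaleR_component)

section \<open>Spectral decomposition of Hermitian matrices\<close>

lemma quadratic_nonpos_imp_linear_coeff_eq_0:
  fixes a q :: real
  assumes "\<And>s. a * s + q * s\<^sup>2 \<le> 0" and "0 \<le> a"
  shows "a = 0"
proof (rule ccontr)
  assume "a \<noteq> 0"
  define s where "s = a / (\<bar>q\<bar> + 1)"
  have "s > 0"
    using \<open>a \<noteq> 0\<close> \<open>0 \<le> a\<close> by (simp add: s_def)
  have "- \<bar>q\<bar> * s \<le> q * s"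
    using \<open>s > 0\<close> by (intro mult_right_mono) auto
  moreover have "\<bar>q\<bar> * s < a"
    using \<open>a \<noteq> 0\<close> \<open>0 \<le> a\<close> by (simp add: s_def field_simps)
  ultimately have "0 < s * (a + q * s)"
    using \<open>s > 0\<close> by simp
  also have "\<dots> = a * s + q * s\<^sup>2"
    by (simp add: power2_eq_square algebra_simps)
  finally show False
    using assms(1)[of s] by simp
qed

lemma hermitian_rayleigh_maximizer_is_eigenvector:
  fixes M :: "complex^'n^'n"
  assumes herm: "hermitian M" and S: "subspace S" and inv: "\<And>x. x \<in> S \<Longrightarrow> M *v x \<in> S"
    and x: "x \<in> S" "x \<bullet> x = 1"
    and max: "\<And>y. y \<in> S \<Longrightarrow> y \<bullet> (M *v y) \<le> (x \<bullet> (M *v x)) * (y \<bullet> y)"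
  shows "M *v x = (x \<bullet> (M *v x)) *\<^sub>R x"
proof -
  define l where "l = x \<bullet> (M *v x)"
  define z where "z = M *v x - l *\<^sub>R x"
  have "z \<in> S"
    using x inv S by (simp add: z_def subspace_diff subspace_scale)
  have Mz: "x \<bullet> (M *v z) = z \<bullet> z + l * (x \<bullet> z)" "z \<bullet> (M *v x) = z \<bullet> z + l * (x \<bullet> z)"
    using hermitian_inner_mult[OF herm, of x z]
    by (simp_all add: z_def inner_diff_left inner_commute algebra_simps)
  \<comment> \<open>maximality along the line \<open>x + s z\<close> kills the first-order term \<open>2 \<parallel>z\<parallel>\<^sup>2 s\<close>\<close>
  have "2 * (z \<bullet> z) * s + (z \<bullet> (M *v z) - l * (z \<bullet> z)) * s\<^sup>2 \<le> 0" for s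
  proof -
    let ?y = "x + s *\<^sub>R z"
    have "?y \<bullet> (M *v ?y) = l + s * (x \<bullet> (M *v z)) + s * (z \<bullet> (M *v x)) + s\<^sup>2 * (z \<bullet> (M *v z))"
      by (simp add: matrix_vector_right_distrib matrix_vector_mult_scaleR_right inner_add_left
          inner_add_right l_def power2_eq_square distrib_left)
    moreover have "?y \<bullet> ?y = 1 + 2 * s * (x \<bullet> z) + s\<^sup>2 * (z \<bullet> z)"
      using x by (simp add: inner_add_left inner_add_right inner_commute power2_eq_square)
    ultimately have "?y \<bullet> (M *v ?y) - l * (?y \<bullet> ?y)
        = 2 * (z \<bullet> z) * s + (z \<bullet> (M *v z) - l * (z \<bullet> z)) * s\<^sup>2"
      unfolding Mz by (simp add: algebra_simps)
    moreover have "?y \<in> S"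
      using x \<open>z \<in> S\<close> S by (simp add: subspace_add subspace_scale)
    ultimately show ?thesis
      using max[of ?y] by (simp add: l_def)
  qed
  then have "2 * (z \<bullet> z) = 0"
    by (intro quadratic_nonpos_imp_linear_coeff_eq_0) auto
  then show ?thesis
    by (simp add: z_def l_def)
qed

lemma hermitian_eigenvector_in_invariant_subspace:
  fixes M :: "complex^'n^'n"
  assumes herm: "hermitian M" and S: "subspace S" and inv: "\<And>x. x \<in> S \<Longrightarrow> M *v x \<in> S"
    and "S \<noteq> {0}"
  obtains v l where "v \<in> S" "v \<noteq> 0" "M *v v = l *\<^sub>R v"
proof -
  let ?K = "S \<inter> sphere 0 1"
  obtain y where y: "y \<in> S" "y \<noteq> 0"
    using \<open>S \<noteq> {0}\<close> S subspace_0 by blast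
  then have "(1 / norm y) *\<^sub>R y \<in> ?K"
    using S by (simp add: subspace_scale)
  moreover have "compact ?K"
    by (intro closed_Int_compact closed_subspace S compact_sphere)
  moreover have "continuous_on ?K (\<lambda>x. x \<bullet> (M *v x))"
    by (intro continuous_intros linear_continuous_on) simp
  ultimately obtain x where x: "x \<in> ?K" and max: "\<And>y. y \<in> ?K \<Longrightarrow> y \<bullet> (M *v y) \<le> x \<bullet> (M *v x)"
    using continuous_attains_sup[of ?K] by blast
  have "y \<bullet> (M *v y) \<le> (x \<bullet> (M *v x)) * (y \<bullet> y)" if "y \<in> S" "y \<noteq> 0" for y
  proof -
    have "(1 / norm y) *\<^sub>R y \<in> ?K"
      using that S by (simp add: subspace_scale)
    from max[OF this] have "(y \<bullet> (M *v y)) / (norm y)\<^sup>2 \<le> x \<bullet> (M *v x)"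
      by (simp add: matrix_vector_mult_scaleR_right power2_eq_square)
    then show ?thesis
      using that by (simp add: divide_le_eq power2_norm_eq_inner mult.commute)
  qed
  then have "M *v x = (x \<bullet> (M *v x)) *\<^sub>R x"
    using x by (intro hermitian_rayleigh_maximizer_is_eigenvector[OF herm S inv])
      (force simp: norm_eq_1)+
  moreover have "x \<in> S" "x \<noteq> 0"
    using x by auto
  ultimately show ?thesis
    using that by blast
qed

lemma hermitian_invariant_subspace_subset_span_eigenvectors:
  fixes M :: "complex^'n^'n"
  assumes herm: "hermitian M"
  shows "subspace S \<Longrightarrow> (\<And>x. x \<in> S \<Longrightarrow> M *v x \<in> S) \<Longrightarrow> S \<subseteq> span {v. \<exists>l. M *v v = l *\<^sub>R v}"
proof (induction "dim S" arbitrary: S rule: less_induct)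
  case less
  show ?case
  proof (cases "S = {0}")
    case False
    then obtain v l where v: "v \<in> S" "v \<noteq> 0" "M *v v = l *\<^sub>R v"
      using hermitian_eigenvector_in_invariant_subspace[OF herm less.prems False] by blast
    define S' where "S' = {y \<in> S. v \<bullet> y = 0}"
    have "subspace S'"
      using less.prems(1) unfolding S'_def subspace_def by (auto simp: inner_add_right)
    moreover have "M *v x \<in> S'" if "x \<in> S'" for x
      using that less.prems(2) v(3) hermitian_inner_mult[OF herm, of v x] by (simp add: S'_def)
    moreover have "dim S' < dim S"
    proof (rule dim_psubset)
      have "v \<notin> S'"
        using v by (simp add: S'_def)
      moreover have "S' \<subseteq> S"
        by (auto simp: S'_def)
      ultimately have "S' \<subset> S"
        using v(1) by blast
      then show "span S' \<subset> span S"
        using \<open>subspace S'\<close> less.prems(1) by (metis span_eq_iff)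
    qed
    ultimately have IH: "S' \<subseteq> span {v. \<exists>l. M *v v = l *\<^sub>R v}"
      using less.hyps by blast
    show ?thesis
    proof
      fix y assume "y \<in> S"
      define c where "c = (v \<bullet> y) / (v \<bullet> v)"
      have "y - c *\<^sub>R v \<in> S'"
        using \<open>y \<in> S\<close> v less.prems(1)
        by (simp add: S'_def c_def subspace_diff subspace_scale inner_diff_right)
      moreover have "v \<in> span {v. \<exists>l. M *v v = l *\<^sub>R v}"
        using v by (auto intro: span_base)
      ultimately have "(y - c *\<^sub>R v) + c *\<^sub>R v \<in> span {v. \<exists>l. M *v v = l *\<^sub>R v}"
        using IH by (intro span_add span_scale) auto
      then show "y \<in> span {v. \<exists>l. M *v v = l *\<^sub>R v}"
        by simp
    qed
  qed (simp add: span_0)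
qed

lemma zero_in_eigenspace [simp]: "0 \<in> eigenspace M l"
  by (simp add: eigenspace_def)

lemma subspace_eigenspace: "subspace (eigenspace M l)"
  by (auto simp: subspace_def eigenspace_def matrix_vector_right_distrib vector_ssub_ldistrib
      scaleR_eq_of_real_scale matrix_vector_mult_scale_right vector_smult_assoc mult.commute)

lemma eigenspace_eq_0: "l \<notin> spec M \<Longrightarrow> eigenspace M l = {0}"
  by (auto simp: spec_def eigenspace_def)

lemma hermitian_eigenspaces_orthogonal:
  assumes "hermitian M" "u \<in> eigenspace M l" "w \<in> eigenspace M m" "l \<noteq> m"
  shows "cinner u w = 0"
proof -
  have "complex_of_real l * cinner u w = complex_of_real m * cinner u w"
    using hermitian_cinner_mult[OF assms(1), of u w] assms(2,3)
    by (simp add: eigenspace_def cinner_scale_left cinner_scale_right)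
  then show ?thesis
    using assms(4) by simp
qed

lemma hermitian_eigen_decomposition:
  fixes M :: "complex^'n^'n"
  assumes "hermitian M"
  obtains L x where "finite L" "\<And>l. x l \<in> eigenspace M l" "f = (\<Sum>l\<in>L. x l)"
proof -
  have "f \<in> span {v. \<exists>l. M *v v = l *\<^sub>R v}"
    using hermitian_invariant_subspace_subset_span_eigenvectors[OF assms, of UNIV] by auto
  then obtain T r where T: "finite T" "T \<subseteq> {v. \<exists>l. M *v v = l *\<^sub>R v}" and f: "f = (\<Sum>v\<in>T. r v *\<^sub>R v)"
    unfolding span_explicit by blast
  then have "\<forall>v\<in>T. \<exists>l. M *v v = l *\<^sub>R v"
    by blast
  then obtain eigval where eigval: "\<forall>v\<in>T. M *v v = eigval v *\<^sub>R v"
    by (rule bchoice[THEN exE]) blast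
  define x where "x l = (\<Sum>v\<in>{v\<in>T. eigval v = l}. r v *\<^sub>R v)" for l
  have "x l \<in> eigenspace M l" for l
    unfolding x_def
  proof (rule subspace_sum[OF subspace_eigenspace])
    fix v assume "v \<in> {v\<in>T. eigval v = l}"
    then have "v \<in> eigenspace M l"
      using eigval by (simp add: eigenspace_def scaleR_eq_of_real_scale)
    then show "r v *\<^sub>R v \<in> eigenspace M l"
      by (rule subspace_scale[OF subspace_eigenspace])
  qed
  moreover have "f = (\<Sum>l\<in>eigval ` T. x l)"
    unfolding f x_def using sum.image_gen[OF T(1), of "\<lambda>v. r v *\<^sub>R v" eigval] by simp
  ultimately show ?thesis
    using that T(1) by blast
qed

lemma eigproj_eq:
  fixes M :: "complex^'n^'n"
  assumes herm: "hermitian M" and "finite L" and x: "\<And>l. x l \<in> eigenspace M l"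
    and f: "f = (\<Sum>l\<in>L. x l)"
  shows "eigproj M l f = (if l \<in> L then x l else 0)"
  unfolding eigproj_def
proof (rule the_equality)
  let ?p = "if l \<in> L then x l else 0"
  have "f - ?p = (\<Sum>m\<in>L - {l}. x m)"
    using \<open>finite L\<close> by (simp add: f sum_diff1)
  then have orth: "\<forall>v\<in>eigenspace M l. cinner v (f - ?p) = 0"
    using hermitian_eigenspaces_orthogonal[OF herm _ x] by (simp add: cinner_sum_right)
  moreover have "?p \<in> eigenspace M l"
    using x by simp
  ultimately show "?p \<in> eigenspace M l \<and> (\<forall>v\<in>eigenspace M l. cinner v (f - ?p) = 0)"
    by blast
  fix p assume p: "p \<in> eigenspace M l \<and> (\<forall>v\<in>eigenspace M l. cinner v (f - p) = 0)"
  have "?p - p \<in> eigenspace M l"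
    using p \<open>?p \<in> eigenspace M l\<close> by (simp add: subspace_diff[OF subspace_eigenspace])
  then have "cinner (?p - p) ((f - p) - (f - ?p)) = 0"
    using p orth by (simp add: cinner_diff_right)
  then show "p = ?p"
    by simp
qed

lemma cinner_orthogonal_imp_vec_independent:
  assumes "0 \<notin> S" and orth: "\<And>u w. u \<in> S \<Longrightarrow> w \<in> S \<Longrightarrow> u \<noteq> w \<Longrightarrow> cinner u w = 0"
  shows "vec.independent S"
proof
  assume "vec.dependent S"
  then obtain T c v where T: "finite T" "T \<subseteq> S" "(\<Sum>w\<in>T. c w *s w) = 0" "v \<in> T" "c v \<noteq> 0"
    unfolding vec.dependent_explicit by blast
  have "0 = cinner v (\<Sum>w\<in>T. c w *s w)"
    using T(3) by (simp add: cinner_def)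
  also have "\<dots> = (\<Sum>w\<in>T. if w = v then c v * cinner v v else 0)"
    unfolding cinner_sum_right cinner_scale_right using T(2,4) orth by (intro sum.cong) auto
  also have "\<dots> = c v * cinner v v"
    using T(1,4) by simp
  finally show False
    using T \<open>0 \<notin> S\<close> by auto
qed

lemma hermitian_spec_finite_card:
  fixes M :: "complex^'n^'n"
  assumes herm: "hermitian M"
  shows "finite (spec M)" and "card (spec M) \<le> CARD('n)"
proof -
  have "\<forall>l\<in>spec M. \<exists>v. v \<noteq> 0 \<and> v \<in> eigenspace M l"
    by (auto simp: spec_def eigenspace_def)
  then obtain v where v: "\<forall>l\<in>spec M. v l \<noteq> 0 \<and> v l \<in> eigenspace M l"
    by (rule bchoice[THEN exE]) blast
  have orth: "cinner (v l) (v m) = 0" if "l \<in> spec M" "m \<in> spec M" "l \<noteq> m" for l m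
    using hermitian_eigenspaces_orthogonal[OF herm] v that by blast
  have "inj_on v (spec M)"
  proof (rule inj_onI)
    fix l m assume "l \<in> spec M" "m \<in> spec M" "v l = v m"
    then show "l = m"
      using orth[of l m] v by auto
  qed
  moreover have "vec.independent (v ` spec M)"
    using v orth by (intro cinner_orthogonal_imp_vec_independent) auto
  then have "finite (v ` spec M)" "card (v ` spec M) \<le> CARD('n)"
    using vec.independent_bound_general[of "v ` spec M"] vec.independent_card_le_dim[of "v ` spec M" UNIV]
    by (simp_all add: card_cart_basis)
  ultimately show "finite (spec M)" "card (spec M) \<le> CARD('n)"
    by (simp_all add: card_image finite_image_iff)
qed

lemma eigproj_in_eigenspace:
  assumes "hermitian M"
  shows "eigproj M l f \<in> eigenspace M l"
proof -
  obtain L x where "finite L" "\<And>l. x l \<in> eigenspace M l" "f = (\<Sum>l\<in>L. x l)"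
    using hermitian_eigen_decomposition[OF assms, where f = f] by blast
  then show ?thesis
    using eigproj_eq[OF assms] by simp
qed

lemma sum_eigproj_spec:
  assumes herm: "hermitian M"
  shows "(\<Sum>l\<in>spec M. eigproj M l f) = f"
proof -
  obtain L x where L: "finite L" and x: "\<And>l. x l \<in> eigenspace M l" and f: "f = (\<Sum>l\<in>L. x l)"
    using hermitian_eigen_decomposition[OF herm, where f = f] by blast
  have "(\<Sum>l\<in>spec M. eigproj M l f) = (\<Sum>l\<in>spec M \<inter> L. x l)"
    using hermitian_spec_finite_card(1)[OF herm]
    by (simp add: eigproj_eq[OF herm L x f] sum.inter_restrict)
  also have "\<dots> = (\<Sum>l\<in>L. x l)"
    using L x eigenspace_eq_0 by (intro sum.mono_neutral_left) auto
  finally show ?thesis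
    by (simp add: f)
qed

lemma cinner_eigproj_self:
  assumes herm: "hermitian M"
  shows "cinner f (eigproj M l f) = complex_of_real ((norm (eigproj M l f))\<^sup>2)"
proof -
  have "cinner f (eigproj M l f) = (\<Sum>m\<in>spec M. cinner (eigproj M m f) (eigproj M l f))"
    by (subst (1) sum_eigproj_spec[OF herm, symmetric]) (simp add: cinner_sum_left)
  also have "\<dots> = (\<Sum>m\<in>spec M. if m = l then cinner (eigproj M l f) (eigproj M l f) else 0)"
    using hermitian_eigenspaces_orthogonal[OF herm eigproj_in_eigenspace[OF herm]
        eigproj_in_eigenspace[OF herm]]
    by (intro sum.cong) auto
  also have "\<dots> = cinner (eigproj M l f) (eigproj M l f)"
    using hermitian_spec_finite_card(1)[OF herm] eigenspace_eq_0 eigproj_in_eigenspace[OF herm, of l f]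
    by auto
  finally show ?thesis
    by (simp add: cinner_self)
qed

lemma power_spectrum_eq_norm_eigproj:
  "hermitian M \<Longrightarrow> power_spectrum M f l = (norm (eigproj M l f))\<^sup>2"
  using eigenspace_eq_0 eigproj_in_eigenspace[of M l f]
  by (auto simp: power_spectrum_def cinner_eigproj_self)

lemma sum_norm_eigproj_le_sqrt_card:
  fixes M :: "complex^'n^'n"
  assumes herm: "hermitian M" and "norm f = 1"
  shows "(\<Sum>l\<in>spec M. norm (eigproj M l f)) \<le> sqrt (real CARD('n))"
proof -
  have "(\<Sum>l\<in>spec M. (norm (eigproj M l f))\<^sup>2) = Re (cinner f (\<Sum>l\<in>spec M. eigproj M l f))"
    by (simp add: cinner_sum_right cinner_eigproj_self[OF herm])
  also have "\<dots> = 1"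
    using \<open>norm f = 1\<close> by (simp add: sum_eigproj_spec[OF herm] cinner_self)
  finally have Parseval: "L2_set (\<lambda>l. norm (eigproj M l f)) (spec M) = 1"
    by (simp add: L2_set_def)
  have "(\<Sum>l\<in>spec M. norm (eigproj M l f)) = (\<Sum>l\<in>spec M. \<bar>norm (eigproj M l f)\<bar> * \<bar>1\<bar>)"
    by simp
  also have "\<dots> \<le> L2_set (\<lambda>l. norm (eigproj M l f)) (spec M) * L2_set (\<lambda>l. 1) (spec M)"
    by (rule L2_set_mult_ineq)
  also have "\<dots> = sqrt (real (card (spec M)))"
    by (simp add: Parseval L2_set_constant)
  also have "\<dots> \<le> sqrt (real CARD('n))"
    using hermitian_spec_finite_card(2)[OF herm] by simp
  finally show ?thesis .
qed

lemma eigenvectors_cinner_perturbation: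
  assumes "hermitian A" and u: "u \<in> eigenspace A a" and w: "w \<in> eigenspace B b"
  shows "\<bar>a - b\<bar> * cmod (cinner u w) \<le> spec_norm (B - A) * (norm u * norm w)"
proof -
  have "complex_of_real (b - a) * cinner u w = cinner u ((B - A) *v w)"
    using hermitian_cinner_mult[OF assms(1), of u w] u w
    by (simp add: eigenspace_def matrix_vector_mult_diff_rdistrib cinner_diff_right
        cinner_scale_left cinner_scale_right algebra_simps)
  then have "\<bar>a - b\<bar> * cmod (cinner u w) = cmod (cinner u ((B - A) *v w))"
    by (metis abs_minus_commute norm_mult norm_of_real)
  also have "\<dots> \<le> norm u * norm ((B - A) *v w)"
    by (rule norm_cinner_le)
  also have "\<dots> \<le> norm u * (spec_norm (B - A) * norm w)"
    by (intro mult_left_mono norm_matrix_vector_mult_le) simp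
  finally show ?thesis
    by (simp add: mult_ac)
qed

section \<open>Signed couplings\<close>

definition has_marginals :: "'a set \<Rightarrow> 'b set \<Rightarrow> ('a \<Rightarrow> real) \<Rightarrow> ('b \<Rightarrow> real) \<Rightarrow> ('a \<times> 'b \<Rightarrow> real) \<Rightarrow> bool"
  where "has_marginals X Y p q c \<longleftrightarrow>
    (\<forall>a\<in>X. (\<Sum>b\<in>Y. c (a, b)) = p a) \<and> (\<forall>b\<in>Y. (\<Sum>a\<in>X. c (a, b)) = q b)"

definition transport_cost :: "'a::metric_space set \<Rightarrow> 'a set \<Rightarrow> ('a \<times> 'a \<Rightarrow> real) \<Rightarrow> real"
  where "transport_cost X Y c = (\<Sum>a\<in>X. \<Sum>b\<in>Y. \<bar>c (a, b)\<bar> * dist a b)"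

text \<open>A negative entry \<open>c (i, j)\<close> of a signed coupling is cancelled by taking its deficit
  proportionally out of the positive entries of row \<open>i\<close> and of column \<open>j\<close>, and putting the
  product of the two withdrawals back at the crossing entries \<open>(a, b)\<close>. The marginals are
  unchanged, and since \<open>dist a b \<le> dist a j + dist i j + dist i b\<close> the cost does not increase.\<close>

locale signed_coupling_negative_entry =
  fixes X Y :: "'a::metric_space set" and p q :: "'a \<Rightarrow> real" and c :: "'a \<times> 'a \<Rightarrow> real"
    and i j :: 'a
  assumes finite: "finite X" "finite Y"
    and nonneg: "\<And>a. a \<in> X \<Longrightarrow> 0 \<le> p a" "\<And>b. b \<in> Y \<Longrightarrow> 0 \<le> q b"
    and marginals: "has_marginals X Y p q c"
    and entry: "i \<in> X" "j \<in> Y" "c (i, j) < 0"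
begin

definition deficit :: real where "deficit = - c (i, j)"
definition row_pos :: "'a \<Rightarrow> real" where "row_pos b = max 0 (c (i, b))"
definition col_pos :: "'a \<Rightarrow> real" where "col_pos a = max 0 (c (a, j))"
definition row_mass :: real where "row_mass = (\<Sum>b\<in>Y. row_pos b)"
definition col_mass :: real where "col_mass = (\<Sum>a\<in>X. col_pos a)"
definition cross_mass :: "'a \<Rightarrow> 'a \<Rightarrow> real"
  where "cross_mass a b = deficit / (row_mass * col_mass) * (col_pos a * row_pos b)"

definition redistributed :: "'a \<times> 'a \<Rightarrow> real" where
  "redistributed = (\<lambda>(a, b). c (a, b) + (if a = i \<and> b = j then deficit else 0)
     - (if a = i then deficit / row_mass * row_pos b else 0)
     - (if b = j then deficit / col_mass * col_pos a else 0) + cross_mass a b)"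

lemma deficit_pos: "0 < deficit"
  using entry by (simp add: deficit_def)

lemma row_pos_nonneg: "0 \<le> row_pos b" and col_pos_nonneg: "0 \<le> col_pos a"
  by (simp_all add: row_pos_def col_pos_def)

lemma row_pos_at_entry [simp]: "row_pos j = 0" and col_pos_at_entry [simp]: "col_pos i = 0"
  using entry by (simp_all add: row_pos_def col_pos_def)

lemma deficit_le_row_mass: "deficit \<le> row_mass"
proof -
  have "p i + deficit = (\<Sum>b\<in>Y. c (i, b) + (if b = j then deficit else 0))"
    using marginals entry finite by (simp add: has_marginals_def sum.distrib)
  also have "\<dots> \<le> row_mass"
    unfolding row_mass_def by (intro sum_mono) (auto simp: row_pos_def deficit_def)
  finally show ?thesis
    using nonneg entry by force
qed

lemma deficit_le_col_mass: "deficit \<le> col_mass"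
proof -
  have "q j + deficit = (\<Sum>a\<in>X. c (a, j) + (if a = i then deficit else 0))"
    using marginals entry finite by (simp add: has_marginals_def sum.distrib)
  also have "\<dots> \<le> col_mass"
    unfolding col_mass_def by (intro sum_mono) (auto simp: col_pos_def deficit_def)
  finally show ?thesis
    using nonneg entry by force
qed

lemma row_mass_pos: "0 < row_mass" and col_mass_pos: "0 < col_mass"
  using deficit_pos deficit_le_row_mass deficit_le_col_mass by auto

lemma cross_mass_nonneg: "0 \<le> cross_mass a b"
  using deficit_pos row_mass_pos col_mass_pos row_pos_nonneg col_pos_nonneg
  by (simp add: cross_mass_def)

lemma has_marginals_redistributed: "has_marginals X Y p q redistributed"
proof -
  have "(\<Sum>b\<in>Y. redistributed (a, b)) = (\<Sum>b\<in>Y. c (a, b))" for a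
    using finite entry row_mass_pos col_mass_pos
    by (cases "a = i") (simp_all add: redistributed_def cross_mass_def sum.distrib sum_subtractf
        sum_distrib_left[symmetric] sum_divide_distrib[symmetric] row_mass_def[symmetric])
  moreover have "(\<Sum>a\<in>X. redistributed (a, b)) = (\<Sum>a\<in>X. c (a, b))" for b
    using finite entry row_mass_pos col_mass_pos
    by (cases "b = j") (simp_all add: redistributed_def cross_mass_def sum.distrib sum_subtractf
        sum_distrib_left[symmetric] sum_distrib_right[symmetric] sum_divide_distrib[symmetric]
        col_mass_def[symmetric])
  ultimately show ?thesis
    using marginals by (simp add: has_marginals_def)
qed

lemma redistributed_in_row:
  assumes "b \<noteq> j"
  shows "redistributed (i, b) = c (i, b) - deficit / row_mass * row_pos b"
    and "c (i, b) \<le> 0 \<Longrightarrow> redistributed (i, b) = c (i, b)"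
    and "0 < c (i, b) \<Longrightarrow> 0 \<le> redistributed (i, b)"
proof -
  show eq: "redistributed (i, b) = c (i, b) - deficit / row_mass * row_pos b"
    using assms by (simp add: redistributed_def cross_mass_def)
  show "c (i, b) \<le> 0 \<Longrightarrow> redistributed (i, b) = c (i, b)"
    by (simp add: eq row_pos_def)
  have "deficit / row_mass * c (i, b) \<le> c (i, b)" if "0 < c (i, b)"
    using that deficit_pos deficit_le_row_mass row_mass_pos by (intro mult_left_le_one_le) auto
  then show "0 < c (i, b) \<Longrightarrow> 0 \<le> redistributed (i, b)"
    by (simp add: eq row_pos_def)
qed

lemma redistributed_in_col:
  assumes "a \<noteq> i"
  shows "redistributed (a, j) = c (a, j) - deficit / col_mass * col_pos a"
    and "c (a, j) \<le> 0 \<Longrightarrow> redistributed (a, j) = c (a, j)"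
    and "0 < c (a, j) \<Longrightarrow> 0 \<le> redistributed (a, j)"
proof -
  show eq: "redistributed (a, j) = c (a, j) - deficit / col_mass * col_pos a"
    using assms by (simp add: redistributed_def cross_mass_def)
  show "c (a, j) \<le> 0 \<Longrightarrow> redistributed (a, j) = c (a, j)"
    by (simp add: eq col_pos_def)
  have "deficit / col_mass * c (a, j) \<le> c (a, j)" if "0 < c (a, j)"
    using that deficit_pos deficit_le_col_mass col_mass_pos by (intro mult_left_le_one_le) auto
  then show "0 < c (a, j) \<Longrightarrow> 0 \<le> redistributed (a, j)"
    by (simp add: eq col_pos_def)
qed

lemma redistributed_elsewhere: "a \<noteq> i \<Longrightarrow> b \<noteq> j \<Longrightarrow> redistributed (a, b) = c (a, b) + cross_mass a b"
  by (simp add: redistributed_def)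

lemma redistributed_at_entry: "redistributed (i, j) = 0"
  by (simp add: redistributed_def cross_mass_def deficit_def)

lemma abs_redistributed_le:
  "\<bar>redistributed (a, b)\<bar> \<le> \<bar>c (a, b)\<bar> - (if a = i \<and> b = j then deficit else 0)
     - (if a = i then deficit / row_mass * row_pos b else 0)
     - (if b = j then deficit / col_mass * col_pos a else 0) + cross_mass a b"
proof -
  consider "a = i" "b = j" | "a = i" "b \<noteq> j" | "a \<noteq> i" "b = j" | "a \<noteq> i" "b \<noteq> j"
    by blast
  then show ?thesis
  proof cases
    case 1
    then show ?thesis
      using entry by (simp add: redistributed_at_entry cross_mass_def deficit_def)
  next
    case 2
    then show ?thesis
      using redistributed_in_row[OF \<open>b \<noteq> j\<close>]
      by (cases "c (i, b) \<le> 0") (auto simp: row_pos_def cross_mass_def)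
  next
    case 3
    then show ?thesis
      using redistributed_in_col[OF \<open>a \<noteq> i\<close>]
      by (cases "c (a, j) \<le> 0") (auto simp: col_pos_def cross_mass_def)
  next
    case 4
    then show ?thesis
      using cross_mass_nonneg[of a b] by (simp add: redistributed_elsewhere)
  qed
qed

lemma cross_mass_cost_le:
  "(\<Sum>a\<in>X. \<Sum>b\<in>Y. cross_mass a b * dist a b)
    \<le> deficit / col_mass * (\<Sum>a\<in>X. col_pos a * dist a j) + deficit * dist i j
      + deficit / row_mass * (\<Sum>b\<in>Y. row_pos b * dist i b)"
proof -
  have expand: "(\<Sum>a\<in>X. \<Sum>b\<in>Y. col_pos a * row_pos b * (dist a j + dist i j + dist i b))
      = row_mass * (\<Sum>a\<in>X. col_pos a * dist a j) + row_mass * col_mass * dist i j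
        + col_mass * (\<Sum>b\<in>Y. row_pos b * dist i b)"
    by (simp add: row_mass_def col_mass_def distrib_left sum.distrib
        sum_distrib_left sum_distrib_right mult_ac sum.swap[of _ Y X])
  have "(\<Sum>a\<in>X. \<Sum>b\<in>Y. cross_mass a b * dist a b)
      \<le> (\<Sum>a\<in>X. \<Sum>b\<in>Y. cross_mass a b * (dist a j + dist i j + dist i b))"
  proof (intro sum_mono mult_left_mono)
    fix a b
    show "dist a b \<le> dist a j + dist i j + dist i b"
      using dist_triangle[of a b j] dist_triangle[of j b i] dist_commute[of j i] by linarith
  qed (rule cross_mass_nonneg)
  also have "\<dots> = deficit / (row_mass * col_mass) * (row_mass * (\<Sum>a\<in>X. col_pos a * dist a j)
      + row_mass * col_mass * dist i j + col_mass * (\<Sum>b\<in>Y. row_pos b * dist i b))"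
    unfolding expand[symmetric] by (simp add: cross_mass_def sum_distrib_left mult.assoc)
  also have "\<dots> = deficit / col_mass * (\<Sum>a\<in>X. col_pos a * dist a j) + deficit * dist i j
      + deficit / row_mass * (\<Sum>b\<in>Y. row_pos b * dist i b)"
    using row_mass_pos col_mass_pos by (simp add: field_simps)
  finally show ?thesis .
qed

lemma transport_cost_redistributed_le: "transport_cost X Y redistributed \<le> transport_cost X Y c"
proof -
  have row: "(\<Sum>b\<in>Y. if a = i \<and> b = j then deficit * dist i j else 0)
      = (if a = i then deficit * dist i j else 0)"
    and col: "(\<Sum>b\<in>Y. if a = i then deficit / row_mass * (row_pos b * dist i b) else 0)
      = (if a = i then deficit / row_mass * (\<Sum>b\<in>Y. row_pos b * dist i b) else 0)" for a
    using finite entry by (cases "a = i"; simp add: sum_distrib_left)+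
  have "transport_cost X Y redistributed \<le> (\<Sum>a\<in>X. \<Sum>b\<in>Y. \<bar>c (a, b)\<bar> * dist a b
      - (if a = i \<and> b = j then deficit * dist i j else 0)
      - (if a = i then deficit / row_mass * (row_pos b * dist i b) else 0)
      - (if b = j then deficit / col_mass * (col_pos a * dist a j) else 0)
      + cross_mass a b * dist a b)"
    unfolding transport_cost_def
    by (intro sum_mono order_trans[OF mult_right_mono[OF abs_redistributed_le]])
      (auto simp: algebra_simps)
  also have "\<dots> = transport_cost X Y c - deficit * dist i j
      - deficit / row_mass * (\<Sum>b\<in>Y. row_pos b * dist i b)
      - deficit / col_mass * (\<Sum>a\<in>X. col_pos a * dist a j)
      + (\<Sum>a\<in>X. \<Sum>b\<in>Y. cross_mass a b * dist a b)"
    using finite entry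
    by (simp add: row col transport_cost_def sum.distrib sum_subtractf sum_distrib_left)
  finally show ?thesis
    using cross_mass_cost_le by linarith
qed

lemma negative_entries_redistributed:
  "{z \<in> X \<times> Y. redistributed z < 0} \<subseteq> {z \<in> X \<times> Y. c z < 0} - {(i, j)}"
proof
  fix z assume "z \<in> {z \<in> X \<times> Y. redistributed z < 0}"
  then obtain a b where z: "z = (a, b)" "z \<in> X \<times> Y" and neg: "redistributed (a, b) < 0"
    by auto
  then have "c (a, b) < 0 \<and> (a, b) \<noteq> (i, j)"
    using cross_mass_nonneg[of a b] redistributed_in_row[of b] redistributed_in_col[of a]
      redistributed_elsewhere[of a b] redistributed_at_entry by (cases "a = i"; cases "b = j"; force)
  then show "z \<in> {z \<in> X \<times> Y. c z < 0} - {(i, j)}"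
    using z by auto
qed

end

lemma nonneg_coupling_of_signed_coupling:
  fixes X Y :: "'a::metric_space set"
  assumes fin: "finite X" "finite Y" and nonneg: "\<And>a. a \<in> X \<Longrightarrow> 0 \<le> p a" "\<And>b. b \<in> Y \<Longrightarrow> 0 \<le> q b"
  shows "has_marginals X Y p q c \<Longrightarrow>
    \<exists>\<pi>. (\<forall>z. 0 \<le> \<pi> z) \<and> has_marginals X Y p q \<pi> \<and> transport_cost X Y \<pi> \<le> transport_cost X Y c"
proof (induction "card {z \<in> X \<times> Y. c z < 0}" arbitrary: c rule: less_induct)
  case less
  show ?case
  proof (cases "{z \<in> X \<times> Y. c z < 0} = {}")
    case True
    define \<pi> where "\<pi> z = (if z \<in> X \<times> Y then c z else 0)" for z
    have "\<forall>z. 0 \<le> \<pi> z"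
      using True by (auto simp: \<pi>_def not_less)
    moreover have "has_marginals X Y p q \<pi>" "transport_cost X Y \<pi> = transport_cost X Y c"
      using less.prems by (simp_all add: has_marginals_def transport_cost_def \<pi>_def)
    ultimately show ?thesis
      by (metis order_refl)
  next
    case False
    then obtain i j where "i \<in> X" "j \<in> Y" "c (i, j) < 0"
      by auto
    then interpret signed_coupling_negative_entry X Y p q c i j
      using fin nonneg less.prems by unfold_locales
    have "card {z \<in> X \<times> Y. redistributed z < 0} < card {z \<in> X \<times> Y. c z < 0}"
      using negative_entries_redistributed \<open>i \<in> X\<close> \<open>j \<in> Y\<close> \<open>c (i, j) < 0\<close> fin
      by (intro psubset_card_mono) auto
    then show ?thesis
      using less.hyps has_marginals_redistributed transport_cost_redistributed_le by (meson order_trans)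
  qed
qed

lemma W1_le_transport_cost:
  assumes fin: "finite X" "finite Y" and supp: "{x. p x \<noteq> 0} \<subseteq> X" "{x. q x \<noteq> 0} \<subseteq> Y"
    and nonneg: "\<And>a. a \<in> X \<Longrightarrow> 0 \<le> p a" "\<And>b. b \<in> Y \<Longrightarrow> 0 \<le> q b"
    and "has_marginals X Y p q c"
  shows "W1 p q \<le> transport_cost X Y c"
proof -
  obtain \<pi> where \<pi>: "\<forall>z. 0 \<le> \<pi> z" "has_marginals X Y p q \<pi>"
    "transport_cost X Y \<pi> \<le> transport_cost X Y c"
    using nonneg_coupling_of_signed_coupling[OF fin nonneg \<open>has_marginals X Y p q c\<close>] by blast
  let ?P = "{x. p x \<noteq> 0}" and ?Q = "{x. q x \<noteq> 0}"
  let ?cost = "\<Sum>(a, b)\<in>?P \<times> ?Q. \<pi> (a, b) * \<bar>a - b\<bar>"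
  have vanish: "\<pi> (a, b) = 0" if "a \<in> X" "b \<in> Y" "p a = 0 \<or> q b = 0" for a b
    using that \<pi>(1,2) fin
      sum_nonneg_eq_0_iff[of X "\<lambda>a. \<pi> (a, b)"] sum_nonneg_eq_0_iff[of Y "\<lambda>b. \<pi> (a, b)"]
    by (auto simp: has_marginals_def)
  have "(\<Sum>b\<in>?Q. \<pi> (a, b)) = p a" if "p a \<noteq> 0" for a
    using that \<pi>(2) fin supp vanish sum.mono_neutral_left[of Y ?Q "\<lambda>b. \<pi> (a, b)"]
    by (auto simp: has_marginals_def)
  moreover have "(\<Sum>a\<in>?P. \<pi> (a, b)) = q b" if "q b \<noteq> 0" for b
    using that \<pi>(2) fin supp vanish
      sum.mono_neutral_left[of X ?P "\<lambda>a. \<pi> (a, b)"]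
    by (auto simp: has_marginals_def)
  ultimately have "?cost \<in> {(\<Sum>(a, b)\<in>?P \<times> ?Q. \<pi> (a, b) * \<bar>a - b\<bar>) | \<pi>. (\<forall>z. 0 \<le> \<pi> z) \<and>
      (\<forall>a. p a \<noteq> 0 \<longrightarrow> (\<Sum>b\<in>?Q. \<pi> (a, b)) = p a) \<and> (\<forall>b. q b \<noteq> 0 \<longrightarrow> (\<Sum>a\<in>?P. \<pi> (a, b)) = q b)}"
    using \<pi>(1) by blast
  then have "W1 p q \<le> ?cost"
    unfolding W1_def by (rule cInf_lower) (auto intro!: bdd_belowI[of _ 0] sum_nonneg simp: \<pi>(1))
  also have "?cost = (\<Sum>a\<in>?P. \<Sum>b\<in>?Q. \<bar>\<pi> (a, b)\<bar> * dist a b)"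
    by (simp add: sum.cartesian_product dist_real_def \<pi>(1))
  also have "\<dots> \<le> (\<Sum>a\<in>?P. \<Sum>b\<in>Y. \<bar>\<pi> (a, b)\<bar> * dist a b)"
    using fin supp by (intro sum_mono sum_mono2) auto
  also have "\<dots> \<le> transport_cost X Y \<pi>"
    unfolding transport_cost_def using fin supp by (intro sum_mono2 sum_nonneg) auto
  finally show ?thesis
    using \<pi>(3) by linarith
qed

section \<open>Power spectra of perturbed matrices\<close>

lemma has_marginals_power_spectrum:
  assumes hA: "hermitian A" and hB: "hermitian B"
  shows "has_marginals (spec A) (spec B) (power_spectrum A f) (power_spectrum B f)
    (\<lambda>(a, b). Re (cinner (eigproj A a f) (eigproj B b f)))"
proof -
  have "(\<Sum>b\<in>spec B. Re (cinner (eigproj A a f) (eigproj B b f))) = power_spectrum A f a" for a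
  proof -
    have "(\<Sum>b\<in>spec B. Re (cinner (eigproj A a f) (eigproj B b f)))
        = Re (cinner (eigproj A a f) (\<Sum>b\<in>spec B. eigproj B b f))"
      by (simp add: cinner_sum_right)
    also have "\<dots> = Re (cinner (eigproj A a f) f)"
      by (simp add: sum_eigproj_spec[OF hB])
    also have "\<dots> = Re (cinner f (eigproj A a f))"
      by (subst cinner_commute) simp
    finally show ?thesis
      by (simp add: cinner_eigproj_self[OF hA] power_spectrum_eq_norm_eigproj[OF hA])
  qed
  moreover have "(\<Sum>a\<in>spec A. Re (cinner (eigproj A a f) (eigproj B b f))) = power_spectrum B f b" for b
  proof -
    have "(\<Sum>a\<in>spec A. Re (cinner (eigproj A a f) (eigproj B b f)))
        = Re (cinner (\<Sum>a\<in>spec A. eigproj A a f) (eigproj B b f))"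
      by (simp add: cinner_sum_left)
    then show ?thesis
      by (simp add: sum_eigproj_spec[OF hA] cinner_eigproj_self[OF hB]
          power_spectrum_eq_norm_eigproj[OF hB])
  qed
  ultimately show ?thesis
    by (simp add: has_marginals_def)
qed

lemma abs_Re_cinner_eigproj_le:
  assumes "hermitian A" "hermitian B"
  shows "\<bar>Re (cinner (eigproj A a f) (eigproj B b f))\<bar> * \<bar>a - b\<bar>
    \<le> spec_norm (B - A) * (norm (eigproj A a f) * norm (eigproj B b f))"
proof -
  have "\<bar>Re (cinner (eigproj A a f) (eigproj B b f))\<bar> * \<bar>a - b\<bar>
      \<le> \<bar>a - b\<bar> * cmod (cinner (eigproj A a f) (eigproj B b f))"
    by (simp add: abs_Re_le_cmod mult.commute mult_left_mono)
  also have "\<dots> \<le> spec_norm (B - A) * (norm (eigproj A a f) * norm (eigproj B b f))"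
    using assms by (intro eigenvectors_cinner_perturbation eigproj_in_eigenspace)
  finally show ?thesis .
qed

lemma W1_power_spectrum_le:
  fixes A B :: "complex^'n^'n"
  assumes hA: "hermitian A" and hB: "hermitian B" and "norm f = 1"
  shows "W1 (power_spectrum A f) (power_spectrum B f) \<le> real CARD('n) * spec_norm (B - A)"
proof -
  let ?c = "\<lambda>(a, b). Re (cinner (eigproj A a f) (eigproj B b f))"
  have "W1 (power_spectrum A f) (power_spectrum B f) \<le> transport_cost (spec A) (spec B) ?c"
  proof (rule W1_le_transport_cost)
    show "finite (spec A)" "finite (spec B)"
      using hermitian_spec_finite_card(1) hA hB by auto
    show "{x. power_spectrum A f x \<noteq> 0} \<subseteq> spec A" "{x. power_spectrum B f x \<noteq> 0} \<subseteq> spec B"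
      by (auto simp: power_spectrum_def)
    show "0 \<le> power_spectrum A f a" "0 \<le> power_spectrum B f b" for a b
      by (simp_all add: power_spectrum_eq_norm_eigproj hA hB)
  qed (rule has_marginals_power_spectrum[OF hA hB])
  also have "\<dots> \<le> (\<Sum>a\<in>spec A. \<Sum>b\<in>spec B.
      spec_norm (B - A) * (norm (eigproj A a f) * norm (eigproj B b f)))"
    unfolding transport_cost_def dist_real_def
    using abs_Re_cinner_eigproj_le[OF hA hB] by (intro sum_mono) simp
  also have "\<dots> = spec_norm (B - A)
      * ((\<Sum>a\<in>spec A. norm (eigproj A a f)) * (\<Sum>b\<in>spec B. norm (eigproj B b f)))"
    by (subst sum_product) (simp add: sum_distrib_left)
  also have "\<dots> \<le> spec_norm (B - A) * (sqrt (real CARD('n)) * sqrt (real CARD('n)))"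
    using sum_norm_eigproj_le_sqrt_card[OF hA \<open>norm f = 1\<close>]
      sum_norm_eigproj_le_sqrt_card[OF hB \<open>norm f = 1\<close>]
    by (intro mult_left_mono mult_mono spec_norm_nonneg sum_nonneg norm_ge_zero) auto
  finally show ?thesis
    by (simp add: mult.commute)
qed

theorem proposition3p10:
  fixes H \<Delta> :: "complex^'n^'n" and f :: "complex^'n"
  assumes "hermitian H" and "hermitian \<Delta>" and "norm f = 1"
  shows "\<exists>g. g \<in> O[at (0::real)](\<lambda>t. (t * spec_norm \<Delta>)\<^sup>2) \<and>
    (\<forall>\<^sub>F t in at (0::real).
       spec_norm \<Delta> * \<bar>t\<bar> < gap H / 2 \<longrightarrow>
       W1 (power_spectrum H f) (power_spectrum (H + t *\<^sub>R \<Delta>) f)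
         \<le> real CARD('n) * spec_norm \<Delta> * \<bar>t\<bar> + g t)"
proof (intro exI[of _ "\<lambda>_. 0"] conjI)
  \<comment> \<open>the bound holds for every \<open>t\<close>\<close>
  show "(\<lambda>_. 0) \<in> O[at (0::real)](\<lambda>t. (t * spec_norm \<Delta>)\<^sup>2)"
    by simp
  have perturbed: "hermitian (H + t *\<^sub>R \<Delta>)" for t
    using assms by (intro hermitian_add hermitian_scaleR)
  have "W1 (power_spectrum H f) (power_spectrum (H + t *\<^sub>R \<Delta>) f)
      \<le> real CARD('n) * spec_norm \<Delta> * \<bar>t\<bar>" for t
    using W1_power_spectrum_le[OF assms(1) perturbed assms(3)] by (simp add: spec_norm_scaleR mult_ac)
  then show "\<forall>\<^sub>F t in at (0::real). spec_norm \<Delta> * \<bar>t\<bar> < gap H / 2 \<longrightarrow>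
      W1 (power_spectrum H f) (power_spectrum (H + t *\<^sub>R \<Delta>) f)
        \<le> real CARD('n) * spec_norm \<Delta> * \<bar>t\<bar> + 0"
    by (simp add: always_eventually)
qed

end
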